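(* Let $G=(V,E,\omega)$ be the unweighted star graph on $n\geq3$ nodes. Then $G\in\mathcal C$.
   Context: The unweighted star graph on $n$ nodes has $V=\{1,\dots,n\}$, $\omega_{1j}=\omega_{j1}=1$ for $j\in\{2,\dots,n\}$ and all other $\omega_{ij}=0$. $d_i=\sum_j\omega_{ij}$. Fixed $r\in[0,1]$: for $u:V\to\mathbb R$, $(\Delta u)_i=d_i^{-r}\sum_j\omega_{ij}(u_i-u_j)$, $\mathcal M(u)=\sum_id_i^ru_i$, $\mathrm{vol}(V)=\sum_id_i^r$, $\mathcal A(u)=\frac{\mathcal M(u)}{\mathrm{vol}(V)}\chi_V$. Equilibrium measure $\nu^S$ ($S\subsetneq V$): the unique $\nu$ with $(\Delta\nu)_i=1$ on $S$ and $\nu=0$ off $S$. $f^j:=\nu^{V\setminus\{j\}}-\mathcal A(\nu^{V\setminus\{j\}})$. $\mathcal C$ is the set of finite, simple, connected, undirected, positively edge-weighted graphs (with at least two nodes) such that $f^j_i\geq0$ for all $j\in V$ and all $i\in V\setminus\{j\}$. *)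

theory Defs
  imports Complex_Main
begin

text \<open>A weighted graph is given by a vertex set V and a weight function w;
  w i j > 0 iff {i,j} is an edge.\<close>

definition is_graph :: "'a set \<Rightarrow> ('a \<Rightarrow> 'a \<Rightarrow> real) \<Rightarrow> bool" where
  "is_graph V w \<longleftrightarrow> finite V \<and> card V \<ge> 2
     \<and> (\<forall>i j. w i j = w j i)
     \<and> (\<forall>i j. w i j \<ge> 0)
     \<and> (\<forall>i. w i i = 0)
     \<and> (\<forall>i j. (i \<notin> V \<or> j \<notin> V) \<longrightarrow> w i j = 0)
     \<and> (\<forall>i\<in>V. \<forall>j\<in>V. (i, j) \<in> {(a, b). a \<in> V \<and> b \<in> V \<and> w a b > 0}\<^sup>*)"

definition deg :: "'a set \<Rightarrow> ('a \<Rightarrow> 'a \<Rightarrow> real) \<Rightarrow> 'a \<Rightarrow> real" where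
  "deg V w i = (\<Sum>j\<in>V. w i j)"

definition glap :: "real \<Rightarrow> 'a set \<Rightarrow> ('a \<Rightarrow> 'a \<Rightarrow> real) \<Rightarrow> ('a \<Rightarrow> real) \<Rightarrow> 'a \<Rightarrow> real" where
  "glap r V w u i = (deg V w i) powr (- r) * (\<Sum>j\<in>V. w i j * (u i - u j))"

definition gmass :: "real \<Rightarrow> 'a set \<Rightarrow> ('a \<Rightarrow> 'a \<Rightarrow> real) \<Rightarrow> ('a \<Rightarrow> real) \<Rightarrow> real" where
  "gmass r V w u = (\<Sum>i\<in>V. (deg V w i) powr r * u i)"

definition gvol :: "real \<Rightarrow> 'a set \<Rightarrow> ('a \<Rightarrow> 'a \<Rightarrow> real) \<Rightarrow> real" where
  "gvol r V w = (\<Sum>i\<in>V. (deg V w i) powr r)"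

definition gavg :: "real \<Rightarrow> 'a set \<Rightarrow> ('a \<Rightarrow> 'a \<Rightarrow> real) \<Rightarrow> ('a \<Rightarrow> real) \<Rightarrow> 'a \<Rightarrow> real" where
  "gavg r V w u = (\<lambda>i. if i \<in> V then gmass r V w u / gvol r V w else 0)"

definition eqmeas :: "real \<Rightarrow> 'a set \<Rightarrow> ('a \<Rightarrow> 'a \<Rightarrow> real) \<Rightarrow> 'a set \<Rightarrow> 'a \<Rightarrow> real" where
  "eqmeas r V w S = (THE \<nu>. (\<forall>i\<in>S. glap r V w \<nu> i = 1) \<and> (\<forall>i. i \<notin> S \<longrightarrow> \<nu> i = 0))"

definition fj :: "real \<Rightarrow> 'a set \<Rightarrow> ('a \<Rightarrow> 'a \<Rightarrow> real) \<Rightarrow> 'a \<Rightarrow> 'a \<Rightarrow> real" where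
  "fj r V w j = (\<lambda>i. eqmeas r V w (V - {j}) i - gavg r V w (eqmeas r V w (V - {j})) i)"

definition in_class_C :: "real \<Rightarrow> 'a set \<Rightarrow> ('a \<Rightarrow> 'a \<Rightarrow> real) \<Rightarrow> bool" where
  "in_class_C r V w \<longleftrightarrow> is_graph V w \<and>
     (\<forall>j\<in>V. \<forall>i\<in>V - {j}. fj r V w j i \<ge> 0)"

definition star_w :: "nat \<Rightarrow> nat \<Rightarrow> nat \<Rightarrow> real" where
  "star_w n i j = (if (i = 1 \<and> j \<in> {2..n}) \<or> (j = 1 \<and> i \<in> {2..n}) then 1 else 0)"

end

theory Submission
  imports Defs
begin

text \<open>On the star graph the equilibrium measures can be written down explicitly. For
  \<open>S = V - {1}\<close> the measure is \<open>1\<close> on every leaf. For \<open>S = V - {k}\<close> with \<open>k\<close> a leaf,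
  it is \<open>a = (n - 1) powr r + n - 2\<close> at the centre and \<open>a + 1\<close> at the remaining leaves.
  In both cases the smallest value on \<open>S\<close> dominates the average
  \<open>\<M>(\<nu>) / vol(V)\<close>: in the second case \<open>a \<cdot> vol(V) - \<M>(\<nu>) = (n - 1) powr r \<ge> 0\<close>.\<close>

text \<open>Otherwise the centre \<open>1\<close> is rewritten to \<open>Suc 0\<close> and the star-graph
  equations below no longer match.\<close>
declare One_nat_def [simp del]

lemma powr_neg_mult_eq_1_iff:
  fixes x y r :: real
  assumes "x > 0"
  shows "x powr (- r) * y = 1 \<longleftrightarrow> y = x powr r"
  using assms by (auto simp: powr_minus field_simps)

lemma gvol_eq_gmass_1: "gvol r V w = gmass r V w (\<lambda>_. 1)"
  by (simp add: gvol_def gmass_def)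

lemma eqmeas_eqI:
  assumes "\<forall>i\<in>S. glap r V w \<nu> i = 1" and "\<forall>i. i \<notin> S \<longrightarrow> \<nu> i = 0"
    and "\<And>\<mu>. \<forall>i\<in>S. glap r V w \<mu> i = 1 \<Longrightarrow> \<forall>i. i \<notin> S \<longrightarrow> \<mu> i = 0 \<Longrightarrow> \<mu> = \<nu>"
  shows "eqmeas r V w S = \<nu>"
  unfolding eqmeas_def using assms by (intro the_equality) blast+

lemma fj_apply:
  "i \<in> V \<Longrightarrow> fj r V w j i =
     eqmeas r V w (V - {j}) i - gmass r V w (eqmeas r V w (V - {j})) / gvol r V w"
  by (simp add: fj_def gavg_def)

lemma sum_star_vertices:
  fixes n :: nat
  assumes "1 \<le> n"
  shows "(\<Sum>i\<in>{1..n}. g i) = g 1 + (\<Sum>i\<in>{2..n}. g i)"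
proof -
  have "{1..n} = insert 1 {2..n}"
    using assms by auto
  then show ?thesis
    by simp
qed

lemma sum_star_w_leaf:
  assumes "i \<in> {2..n}"
  shows "(\<Sum>j\<in>{1..n}. star_w n i j * g j) = g 1"
proof -
  have "(\<Sum>j\<in>{1..n}. star_w n i j * g j) = (\<Sum>j\<in>{1..n}. if j = 1 then g j else 0)"
    using assms by (intro sum.cong) (auto simp: star_w_def)
  also have "\<dots> = g 1"
    using assms by simp
  finally show ?thesis .
qed

lemma sum_star_w_center: "(\<Sum>j\<in>{1..n}. star_w n 1 j * g j) = (\<Sum>j\<in>{2..n}. g j)"
proof -
  have "(\<Sum>j\<in>{1..n}. star_w n 1 j * g j) = (\<Sum>j\<in>{1..n}. if j \<in> {2..n} then g j else 0)"
    by (intro sum.cong) (auto simp: star_w_def)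
  also have "\<dots> = (\<Sum>j\<in>{2..n}. g j)"
    by (intro sum.mono_neutral_cong_right) auto
  finally show ?thesis .
qed

lemma deg_star_leaf: "i \<in> {2..n} \<Longrightarrow> deg {1..n} (star_w n) i = 1"
  using sum_star_w_leaf[of i n "\<lambda>_. 1"] by (simp add: deg_def)

lemma deg_star_center: "1 \<le> n \<Longrightarrow> deg {1..n} (star_w n) 1 = real n - 1"
  using sum_star_w_center[of n "\<lambda>_. 1"] by (simp add: deg_def of_nat_diff)

lemma glap_star_leaf: "i \<in> {2..n} \<Longrightarrow> glap r {1..n} (star_w n) u i = u i - u 1"
  unfolding glap_def deg_star_leaf sum_star_w_leaf by simp

lemma glap_star_center:
  "1 \<le> n \<Longrightarrow>
     glap r {1..n} (star_w n) u 1 = (real n - 1) powr (- r) * (\<Sum>j\<in>{2..n}. u 1 - u j)"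
  unfolding glap_def deg_star_center sum_star_w_center by simp

lemma gmass_star:
  assumes "1 \<le> n"
  shows "gmass r {1..n} (star_w n) u = (real n - 1) powr r * u 1 + (\<Sum>i\<in>{2..n}. u i)"
proof -
  have "(\<Sum>i\<in>{2..n}. deg {1..n} (star_w n) i powr r * u i) = (\<Sum>i\<in>{2..n}. u i)"
    by (intro sum.cong) (simp_all only: deg_star_leaf, simp)
  then show ?thesis
    unfolding gmass_def sum_star_vertices[OF assms] deg_star_center[OF assms] by simp
qed

lemma gvol_star: "1 \<le> n \<Longrightarrow> gvol r {1..n} (star_w n) = (real n - 1) powr r + (real n - 1)"
  unfolding gvol_eq_gmass_1 by (simp only: gmass_star) (simp add: of_nat_diff)

lemma is_graph_star:
  assumes "2 \<le> n"
  shows "is_graph {1..n} (star_w n)"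
proof -
  let ?E = "{(a, b). a \<in> {1..n} \<and> b \<in> {1..n} \<and> star_w n a b > 0}"
  have "(i, 1) \<in> ?E\<^sup>*" "(1, i) \<in> ?E\<^sup>*" if "i \<in> {1..n}" for i
    using that assms by (cases "i = 1"; force simp: star_w_def)+
  then have "\<forall>i\<in>{1..n}. \<forall>j\<in>{1..n}. (i, j) \<in> ?E\<^sup>*"
    by (meson rtrancl_trans)
  then show ?thesis
    using assms unfolding is_graph_def by (auto simp: star_w_def)
qed

lemma eqmeas_star_minus_center:
  "eqmeas r {1..n} (star_w n) ({1..n} - {1}) = (\<lambda>i. if i \<in> {2..n} then 1 else 0)"
proof -
  have S: "{1..n} - {1} = {2..n}"
    by auto
  show ?thesis
    unfolding S
  proof (rule eqmeas_eqI)
    fix \<mu>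
    assume eq: "\<forall>i\<in>{2..n}. glap r {1..n} (star_w n) \<mu> i = 1"
      and zero: "\<forall>i. i \<notin> {2..n} \<longrightarrow> \<mu> i = 0"
    have "\<mu> i = 1" if "i \<in> {2..n}" for i
      using that eq zero glap_star_leaf[OF that, of r \<mu>] by simp
    then show "\<mu> = (\<lambda>i. if i \<in> {2..n} then 1 else 0)"
      using zero by (auto simp: fun_eq_iff)
  qed (simp_all add: glap_star_leaf)
qed

lemma eqmeas_star_minus_leaf:
  fixes r :: real
  assumes k: "k \<in> {2..n}"
  defines "a \<equiv> (real n - 1) powr r + real n - 2"
  shows "eqmeas r {1..n} (star_w n) ({1..n} - {k}) =
     (\<lambda>i. if i = 1 then a else if i \<in> {2..n} - {k} then a + 1 else 0)"
    (is "_ = ?\<nu>")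
proof -
  have n: "1 \<le> n" "real n - 1 > 0"
    using k by auto
  have center_sum: "(\<Sum>j\<in>{2..n}. u 1 - u j) = u 1 - (real n - 2)"
    if "u k = 0" and "\<forall>j\<in>{2..n} - {k}. u j = u 1 + 1" for u :: "nat \<Rightarrow> real"
  proof -
    have "(\<Sum>j\<in>{2..n}. u 1 - u j) = u 1 + (\<Sum>j\<in>{2..n} - {k}. - 1)"
      using k that by (simp add: sum.remove)
    then show ?thesis
      using k by (simp add: of_nat_diff)
  qed
  have S: "{1..n} - {k} = insert 1 ({2..n} - {k})"
    using k by auto
  show ?thesis
  proof (rule eqmeas_eqI)
    have "glap r {1..n} (star_w n) ?\<nu> 1 = 1"
      unfolding glap_star_center[OF n(1)] powr_neg_mult_eq_1_iff[OF n(2)]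
      using k center_sum[of ?\<nu>] by (simp add: a_def)
    then show "\<forall>i\<in>{1..n} - {k}. glap r {1..n} (star_w n) ?\<nu> i = 1"
      unfolding S by (auto simp: glap_star_leaf)
  next
    fix \<mu>
    assume eq: "\<forall>i\<in>{1..n} - {k}. glap r {1..n} (star_w n) \<mu> i = 1"
      and zero: "\<forall>i. i \<notin> {1..n} - {k} \<longrightarrow> \<mu> i = 0"
    have leaves: "\<forall>j\<in>{2..n} - {k}. \<mu> j = \<mu> 1 + 1"
    proof
      fix j
      assume j: "j \<in> {2..n} - {k}"
      then have "glap r {1..n} (star_w n) \<mu> j = 1"
        using eq by auto
      then show "\<mu> j = \<mu> 1 + 1"
        using j glap_star_leaf[of j n r \<mu>] by simp
    qed
    have "glap r {1..n} (star_w n) \<mu> 1 = 1"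
      using eq k by auto
    then have "\<mu> 1 = a"
      unfolding glap_star_center[OF n(1)] powr_neg_mult_eq_1_iff[OF n(2)]
      using k zero leaves center_sum[of \<mu>] by (simp add: a_def)
    then show "\<mu> = ?\<nu>"
      using leaves zero by (auto simp: fun_eq_iff)
  qed (use k in auto)
qed

lemma fj_star_center_nonneg:
  assumes "i \<in> {1..n} - {1}"
  shows "fj r {1..n} (star_w n) 1 i \<ge> 0"
proof -
  have i: "i \<in> {2..n}" and n: "1 \<le> n" "real n - 1 > 0"
    using assms by auto
  have "0 < (real n - 1) powr r + (real n - 1)"
    using n by (simp add: add_nonneg_pos)
  then have "(real n - 1) / ((real n - 1) powr r + (real n - 1)) \<le> 1"
    by (simp add: divide_le_eq_1_pos)
  then show ?thesis
    using i n by (simp add: fj_apply eqmeas_star_minus_center gmass_star gvol_star of_nat_diff)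
qed

lemma fj_star_leaf_nonneg:
  assumes k: "k \<in> {2..n}" and i: "i \<in> {1..n} - {k}"
  shows "fj r {1..n} (star_w n) k i \<ge> 0"
proof -
  define D where "D = (real n - 1) powr r"
  define a where "a = D + real n - 2"
  let ?\<nu> = "\<lambda>i. if i = 1 then a else if i \<in> {2..n} - {k} then a + 1 else 0"
  have n: "1 \<le> n" "real n - 1 > 0"
    using k by auto
  have \<nu>: "eqmeas r {1..n} (star_w n) ({1..n} - {k}) = ?\<nu>"
    unfolding a_def D_def by (rule eqmeas_star_minus_leaf[OF k])
  have "(\<Sum>i\<in>{2..n}. ?\<nu> i) = (\<Sum>i\<in>{2..n} - {k}. a + 1)"
    using k by (simp add: sum.remove)
  then have mass: "gmass r {1..n} (star_w n) ?\<nu> = D * a + (real n - 2) * (a + 1)"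
    unfolding gmass_star[OF n(1)] using k by (simp add: D_def of_nat_diff)
  have D: "0 \<le> D"
    by (simp add: D_def)
  have "a * (D + (real n - 1)) - (D * a + (real n - 2) * (a + 1)) = D"
    by (simp add: a_def algebra_simps)
  then have "D * a + (real n - 2) * (a + 1) \<le> a * (D + (real n - 1))"
    using D by linarith
  then have "(D * a + (real n - 2) * (a + 1)) / (D + (real n - 1)) \<le> a"
    using n D by (simp add: pos_divide_le_eq)
  moreover have "a \<le> ?\<nu> i"
    using i by simp
  ultimately show ?thesis
    using i by (simp add: fj_apply \<nu> mass gvol_star n D_def)
qed

theorem lemma6p4:
  fixes n :: nat and r :: real
  assumes "n \<ge> 3" and "0 \<le> r" and "r \<le> 1"
  shows "in_class_C r {1..n} (star_w n)"
proof -
  have "fj r {1..n} (star_w n) j i \<ge> 0" if "j \<in> {1..n}" and "i \<in> {1..n} - {j}" for i j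
  proof (cases "j = 1")
    case True
    then show ?thesis
      using that fj_star_center_nonneg[of i n r] by simp
  next
    case False
    then show ?thesis
      using that fj_star_leaf_nonneg by simp
  qed
  then show ?thesis
    using assms(1) is_graph_star unfolding in_class_C_def by simp
qed

end
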